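(* Fix $n\ge1$. A point $H\in\mathcal H$ belongs to $\mathcal S_n=\{H\in\mathcal H: X_n(H)=0,\ H^{(n)}=z^n\}$ if and only if $z^n\cdot\mathcal H_+\subset\mathcal H_+$, i.e. multiplication by $z^n$ maps the span $\mathcal H_+$ of the series $H^{(0)},H^{(1)},\dots$ of that point into itself.
   Context: Let $z$ be a formal variable and $\mathcal L$ the space of formal Laurent series $\sum_{j\le N} l_j z^j$ (finitely many positive powers of $z$). Let $\mathcal H$ be the set of sequences $H=(H^{(k)})_{k\ge0}$ of elements of $\mathcal L$ with $H^{(0)}=1$ and, for $k\ge1$, $H^{(k)}=z^k+\sum_{l\ge1}H^k_l z^{-l}$; the coefficients $H^k_l$ are coordinates on $\mathcal H$, and we set $H^0_l=0$. The central system (CS) is the family of vector fields $X_j$, $j\ge1$, on $\mathcal H$, with associated times $t_j$, defined by $$\frac{\partial H^{(k)}}{\partial t_j}=H^{(j+k)}-H^{(j)}H^{(k)}+\sum_{l=1}^{k}H^j_lH^{(k-l)}+\sum_{l=1}^{j}H^k_lH^{(j-l)},\qquad k\ge0;$$ the right-hand side contains only negative powers of $z$, so this determines the components $X_j(H^k_l)$. For $H\in\mathcal H$ let $\mathcal H_+=\mathrm{span}\{H^{(k)}:k\ge0\}$ (finite linear combinations). *)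

theory Defs
  imports Main "HOL.Complex"
begin

text \<open>Formal Laurent series in z with finitely many positive powers, represented
  by their coefficient function: f j is the coefficient of z^j.\<close>
type_synonym lseries = "int \<Rightarrow> complex"

definition laurentL :: "lseries set" where
  "laurentL = {f. \<exists>N. \<forall>j>N. f j = 0}"

text \<open>Product (Cauchy product); for elements of laurentL the index set is finite.\<close>
definition lmul :: "lseries \<Rightarrow> lseries \<Rightarrow> lseries" where
  "lmul f g = (\<lambda>j. \<Sum>i\<in>{i. f i \<noteq> 0 \<and> g (j - i) \<noteq> 0}. f i * g (j - i))"

definition zpow :: "nat \<Rightarrow> lseries" where
  "zpow n = (\<lambda>j. if j = int n then 1 else 0)"

definition Hspace :: "(nat \<Rightarrow> lseries) set" where
  "Hspace = {H. H 0 = zpow 0 \<and>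
     (\<forall>k\<ge>1. H k \<in> laurentL \<and> (\<forall>j\<ge>0. H k j = zpow k j))}"

definition Hc :: "(nat \<Rightarrow> lseries) \<Rightarrow> nat \<Rightarrow> nat \<Rightarrow> complex" where
  "Hc H k l = (if k = 0 then 0 else H k (- int l))"

text \<open>Right-hand side of the central system for dH^(k)/dt_j.\<close>
definition cs_rhs :: "(nat \<Rightarrow> lseries) \<Rightarrow> nat \<Rightarrow> nat \<Rightarrow> lseries" where
  "cs_rhs H j k = (\<lambda>m. H (j + k) m - lmul (H j) (H k) m
      + (\<Sum>l=1..k. Hc H j l * H (k - l) m)
      + (\<Sum>l=1..j. Hc H k l * H (j - l) m))"

definition X_vanishes :: "nat \<Rightarrow> (nat \<Rightarrow> lseries) \<Rightarrow> bool" where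
  "X_vanishes j H \<longleftrightarrow> (\<forall>k\<ge>1. \<forall>l\<ge>1. cs_rhs H j k (- int l) = 0)"

definition S_n :: "nat \<Rightarrow> (nat \<Rightarrow> lseries) set" where
  "S_n n = {H \<in> Hspace. X_vanishes n H \<and> H n = zpow n}"

definition Hplus :: "(nat \<Rightarrow> lseries) \<Rightarrow> lseries set" where
  "Hplus H = {f. \<exists>c :: nat \<Rightarrow> complex. \<exists>N. f = (\<lambda>m. \<Sum>k\<le>N. c k * H k m)}"

end

theory Submission
  imports Defs
begin

(* On nonnegative powers of z every H^(k) is just z^k, so an element of H_+ is determined by
   its nonnegative part: an element of H_+ with only negative powers is zero.  If H^(n) = z^n,
   multiplication by H^(n) is a shift, and the right-hand side of the central system,
   H^(n+k) - z^n H^(k) + (an element of H_+), has only negative powers; so X_n(H) = 0 holds iff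
   every z^n H^(k) lies in H_+.  For k = 0 this reads z^n \<in> H_+, which again by the nonnegative
   parts means H^(n) = z^n.  The argument never uses n \<ge> 1. *)

definition only_negative_powers :: "lseries \<Rightarrow> bool" where
  "only_negative_powers f \<longleftrightarrow> (\<forall>j\<ge>0. f j = 0)"

lemma Hspace_coeff_nonneg:
  assumes "H \<in> Hspace" and "j \<ge> 0"
  shows "H k j = zpow k j"
  using assms by (cases "k = 0") (auto simp: Hspace_def)

lemma lmul_zpow: "lmul (zpow n) f = (\<lambda>j. f (j - int n))"
proof
  fix j
  have "{i. zpow n i \<noteq> 0 \<and> f (j - i) \<noteq> 0} = (if f (j - int n) = 0 then {} else {int n})"
    by (auto simp: zpow_def)
  then show "lmul (zpow n) f j = f (j - int n)"
    by (simp add: lmul_def zpow_def)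
qed

lemma HplusI: "f = (\<lambda>m. \<Sum>k\<le>N. c k * H k m) \<Longrightarrow> f \<in> Hplus H"
  unfolding Hplus_def by blast

lemma HplusE:
  assumes "f \<in> Hplus H"
  obtains c N where "f = (\<lambda>m. \<Sum>k\<le>N. c k * H k m)"
  using assms unfolding Hplus_def by blast

lemma Hplus_basis: "H k \<in> Hplus H"
proof -
  have "{..k} \<inter> {j. j = k} = {k}"
    by auto
  then have "H k = (\<lambda>m. \<Sum>j\<le>k. of_bool (j = k) * H j m)"
    by simp
  then show ?thesis
    by (rule HplusI)
qed

lemma Hplus_scale:
  assumes "f \<in> Hplus H"
  shows "(\<lambda>m. a * f m) \<in> Hplus H"
proof -
  obtain c N where "f = (\<lambda>m. \<Sum>k\<le>N. c k * H k m)"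
    using assms by (rule HplusE)
  then have "(\<lambda>m. a * f m) = (\<lambda>m. \<Sum>k\<le>N. (a * c k) * H k m)"
    by (simp add: sum_distrib_left mult.assoc)
  then show ?thesis
    by (rule HplusI)
qed

lemma Hplus_add:
  assumes "f \<in> Hplus H" and "g \<in> Hplus H"
  shows "(\<lambda>m. f m + g m) \<in> Hplus H"
proof -
  obtain c N d M where f: "f = (\<lambda>m. \<Sum>k\<le>N. c k * H k m)"
    and g: "g = (\<lambda>m. \<Sum>k\<le>M. d k * H k m)"
    using assms by (elim HplusE)
  let ?L = "max N M"
  have pad: "(\<Sum>k\<le>K. a k * H k m) = (\<Sum>k\<le>?L. (of_bool (k \<le> K) * a k) * H k m)"
    if "K \<le> ?L" for a K m
  proof -
    have "{..?L} \<inter> {k. k \<le> K} = {..K}"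
      using that by auto
    then show ?thesis
      by (simp add: mult.assoc)
  qed
  have "(\<lambda>m. f m + g m) =
      (\<lambda>m. \<Sum>k\<le>?L. (of_bool (k \<le> N) * c k + of_bool (k \<le> M) * d k) * H k m)"
    unfolding f g pad[where K = N, OF max.cobounded1] pad[where K = M, OF max.cobounded2]
    by (simp add: distrib_right sum.distrib)
  then show ?thesis
    by (rule HplusI)
qed

lemma Hplus_zero: "(\<lambda>m. 0) \<in> Hplus H"
  using Hplus_scale[OF Hplus_basis, of 0] by simp

lemma Hplus_diff:
  assumes "f \<in> Hplus H" and "g \<in> Hplus H"
  shows "(\<lambda>m. f m - g m) \<in> Hplus H"
  using Hplus_add[OF assms(1) Hplus_scale[OF assms(2), of "-1"]] by simp

lemma Hplus_sum:
  assumes "finite A" and "\<And>k. k \<in> A \<Longrightarrow> g k \<in> Hplus H"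
  shows "(\<lambda>m. \<Sum>k\<in>A. c k * g k m) \<in> Hplus H"
  using assms
proof (induction A rule: finite_induct)
  case empty
  then show ?case
    by (simp add: Hplus_zero)
next
  case (insert x A)
  then have "(\<lambda>m. c x * g x m + (\<Sum>k\<in>A. c k * g k m)) \<in> Hplus H"
    by (intro Hplus_add Hplus_scale) auto
  then show ?case
    using insert.hyps by simp
qed

lemma Hplus_only_negative_powers_eq_0:
  assumes "H \<in> Hspace" and "f \<in> Hplus H" and "only_negative_powers f"
  shows "f = (\<lambda>m. 0)"
proof -
  obtain c N where f: "f = (\<lambda>m. \<Sum>k\<le>N. c k * H k m)"
    using assms(2) by (rule HplusE)
  have "c j = 0" if "j \<le> N" for j
  proof -
    have "f (int j) = (\<Sum>k\<le>N. c k * zpow k (int j))"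
      unfolding f using Hspace_coeff_nonneg[OF assms(1)] by simp
    also have "\<dots> = (\<Sum>k\<le>N. if k = j then c k else 0)"
      by (intro sum.cong) (auto simp: zpow_def)
    also have "\<dots> = c j"
      using that by simp
    finally show ?thesis
      using assms(3) by (simp add: only_negative_powers_def)
  qed
  then show ?thesis
    unfolding f by simp
qed

lemma zpow_mult_Hplus_subset_iff:
  "(\<forall>f\<in>Hplus H. lmul (zpow n) f \<in> Hplus H) \<longleftrightarrow> (\<forall>k. lmul (zpow n) (H k) \<in> Hplus H)"
proof (intro iffI ballI)
  assume shifted_basis: "\<forall>k. lmul (zpow n) (H k) \<in> Hplus H"
  fix f
  assume "f \<in> Hplus H"
  then obtain c N where f: "f = (\<lambda>m. \<Sum>k\<le>N. c k * H k m)"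
    by (rule HplusE)
  have "lmul (zpow n) f = (\<lambda>m. \<Sum>k\<le>N. c k * lmul (zpow n) (H k) m)"
    by (simp add: f lmul_zpow)
  also have "\<dots> \<in> Hplus H"
    using shifted_basis by (intro Hplus_sum) auto
  finally show "lmul (zpow n) f \<in> Hplus H" .
qed (simp add: Hplus_basis)

lemma Hplus_contains_zpow_iff:
  assumes "H \<in> Hspace"
  shows "zpow n \<in> Hplus H \<longleftrightarrow> H n = zpow n"
proof
  assume "zpow n \<in> Hplus H"
  then have "(\<lambda>m. zpow n m - H n m) \<in> Hplus H"
    by (intro Hplus_diff Hplus_basis)
  moreover have "only_negative_powers (\<lambda>m. zpow n m - H n m)"
    using Hspace_coeff_nonneg[OF assms] by (simp add: only_negative_powers_def)
  ultimately have "(\<lambda>m. zpow n m - H n m) = (\<lambda>m. 0)"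
    by (rule Hplus_only_negative_powers_eq_0[OF assms])
  then show "H n = zpow n"
    by (simp add: fun_eq_iff)
qed (metis Hplus_basis)

lemma cs_rhs_in_Hplus_iff: "cs_rhs H j k \<in> Hplus H \<longleftrightarrow> lmul (H j) (H k) \<in> Hplus H"
proof -
  define R where "R m = H (j + k) m + (\<Sum>l=1..k. Hc H j l * H (k - l) m)
      + (\<Sum>l=1..j. Hc H k l * H (j - l) m)" for m
  have R: "R \<in> Hplus H"
    unfolding R_def by (intro Hplus_add Hplus_sum Hplus_basis) auto
  have cs_eq: "(\<lambda>m. R m - lmul (H j) (H k) m) = cs_rhs H j k"
    and prod_eq: "(\<lambda>m. R m - cs_rhs H j k m) = lmul (H j) (H k)"
    by (auto simp: cs_rhs_def R_def)
  show ?thesis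
    using Hplus_diff[OF R, of "lmul (H j) (H k)"] Hplus_diff[OF R, of "cs_rhs H j k"]
    unfolding cs_eq prod_eq by blast
qed

lemma cs_rhs_only_negative_powers:
  assumes H: "H \<in> Hspace" and Hn: "H n = zpow n"
  shows "only_negative_powers (cs_rhs H n k)"
  unfolding only_negative_powers_def
proof (intro allI impI)
  fix m :: int
  assume m: "m \<ge> 0"
  have coeff: "H i m = zpow i m" for i
    using Hspace_coeff_nonneg[OF H m] .
  have sum_k: "(\<Sum>l=1..k. Hc H n l * H (k - l) m) = 0"
    by (rule sum.neutral) (auto simp: Hc_def Hn zpow_def)
  have "(\<Sum>l=1..n. Hc H k l * H (n - l) m) =
      (\<Sum>l=1..n. if l = nat (int n - m) then Hc H k l else 0)"
    using m by (intro sum.cong) (auto simp: coeff zpow_def)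
  also have "\<dots> = (if m < int n then H k (m - int n) else 0)"
    using m H by (auto simp: Hc_def Hspace_def zpow_def)
  finally have sum_n: "(\<Sum>l=1..n. Hc H k l * H (n - l) m) =
      (if m < int n then H k (m - int n) else 0)" .
  have prod: "lmul (H n) (H k) m = H k (m - int n)"
    by (simp add: Hn lmul_zpow)
  have "cs_rhs H n k m = H (n + k) m - H k (m - int n) + (if m < int n then H k (m - int n) else 0)"
    unfolding cs_rhs_def sum_k sum_n prod by simp
  also have "\<dots> = 0"
    using Hspace_coeff_nonneg[OF H, of "m - int n" k] by (simp add: coeff zpow_def)
  finally show "cs_rhs H n k m = 0" .
qed

lemma cs_rhs_eq_0_iff:
  assumes H: "H \<in> Hspace" and Hn: "H n = zpow n"
  shows "cs_rhs H n k = (\<lambda>m. 0) \<longleftrightarrow> lmul (zpow n) (H k) \<in> Hplus H"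
proof -
  have "cs_rhs H n k = (\<lambda>m. 0) \<longleftrightarrow> cs_rhs H n k \<in> Hplus H"
  proof
    assume "cs_rhs H n k \<in> Hplus H"
    then show "cs_rhs H n k = (\<lambda>m. 0)"
      by (rule Hplus_only_negative_powers_eq_0[OF H _ cs_rhs_only_negative_powers[OF H Hn]])
  qed (simp add: Hplus_zero)
  then show ?thesis
    by (simp add: cs_rhs_in_Hplus_iff Hn)
qed

lemma X_vanishes_iff_zpow_mult_in_Hplus:
  assumes H: "H \<in> Hspace" and Hn: "H n = zpow n"
  shows "X_vanishes n H \<longleftrightarrow> (\<forall>k\<ge>1. lmul (zpow n) (H k) \<in> Hplus H)"
proof -
  have "cs_rhs H n k = (\<lambda>m. 0) \<longleftrightarrow> (\<forall>l\<ge>1. cs_rhs H n k (- int l) = 0)" for k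
  proof
    assume neg: "\<forall>l\<ge>1. cs_rhs H n k (- int l) = 0"
    show "cs_rhs H n k = (\<lambda>m. 0)"
    proof
      fix m :: int
      show "cs_rhs H n k m = 0"
      proof (cases "m \<ge> 0")
        case True
        then show ?thesis
          using cs_rhs_only_negative_powers[OF H Hn] by (simp add: only_negative_powers_def)
      next
        case False
        then have "m = - int (nat (- m))" and "nat (- m) \<ge> 1"
          by auto
        then show ?thesis
          using neg by metis
      qed
    qed
  qed simp
  then show ?thesis
    unfolding X_vanishes_def by (simp add: cs_rhs_eq_0_iff[OF H Hn])
qed

theorem mainTheorem7:
  fixes n :: nat and H :: "nat \<Rightarrow> lseries"
  assumes "n \<ge> 1" and "H \<in> Hspace"
  shows "H \<in> S_n n \<longleftrightarrow> (\<forall>f\<in>Hplus H. lmul (zpow n) f \<in> Hplus H)"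
proof -
  have "H 0 = zpow 0"
    using assms(2) by (simp add: Hspace_def)
  then have "lmul (zpow n) (H 0) = zpow n"
    by (simp add: lmul_zpow) (simp add: zpow_def)
  then have shifted_H0: "lmul (zpow n) (H 0) \<in> Hplus H \<longleftrightarrow> H n = zpow n"
    using Hplus_contains_zpow_iff[OF assms(2)] by simp
  have "H \<in> S_n n \<longleftrightarrow> H n = zpow n \<and> (\<forall>k\<ge>1. lmul (zpow n) (H k) \<in> Hplus H)"
    using X_vanishes_iff_zpow_mult_in_Hplus[OF assms(2)] assms(2) by (auto simp: S_n_def)
  also have "\<dots> \<longleftrightarrow> (\<forall>k\<in>{0} \<union> {1..}. lmul (zpow n) (H k) \<in> Hplus H)"
    using shifted_H0 by auto
  also have "{0} \<union> {1..} = (UNIV :: nat set)"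
    by auto
  also have "(\<forall>k\<in>UNIV. lmul (zpow n) (H k) \<in> Hplus H) \<longleftrightarrow>
      (\<forall>f\<in>Hplus H. lmul (zpow n) f \<in> Hplus H)"
    by (simp add: zpow_mult_Hplus_subset_iff)
  finally show ?thesis .
qed

end
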